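(* $\mathrm{Isom}_{\mathbb Z}(L)/W^+\cong \mathbb Z_2\times D$, where $D$ is the dihedral group of order $12$.
   Context: $\mathbb F$ is a field of characteristic zero, $\mathfrak{sl}_2$ the Lie algebra of $2\times2$ trace-zero matrices over $\mathbb F$ with trace form $(u,v)=\mathrm{tr}(uv)$. Equitable basis: $x=\begin{pmatrix}1&0\\0&-1\end{pmatrix}$, $y=\begin{pmatrix}-1&2\\0&1\end{pmatrix}$, $z=\begin{pmatrix}-1&0\\-2&1\end{pmatrix}$, $L=\mathbb Zx\oplus\mathbb Zy\oplus\mathbb Zz$. $\mathrm{Isom}_{\mathbb Z}(L)$ is the group of trace-form isometries $\varphi$ ($\mathbb F$-linear bijections preserving $(\,,\,)$) of $\mathfrak{sl}_2$ with $\varphi(L)=L$. For $u\in\{x,y,z\}$, $r_u(v)=v-(u,v)u$; $W=\langle r_x,r_y,r_z\rangle$, and $W^+$ is the subgroup of elements of $W$ of even length with respect to the generators $r_x,r_y,r_z$ (a normal subgroup of $\mathrm{Isom}_{\mathbb Z}(L)$). *)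

theory Defs
  imports "HOL-Analysis.Finite_Cartesian_Product" "HOL-Algebra.Elementary_Groups"
    "HOL-Algebra.Generated_Groups" "HOL-Algebra.Coset"
begin

type_synonym 'a mat2 = "'a ^ 2 ^ 2"

definition mat2 :: "'a \<Rightarrow> 'a \<Rightarrow> 'a \<Rightarrow> 'a \<Rightarrow> 'a mat2" where
  "mat2 a b c d = (\<chi> i j. if i = 1 then (if j = 1 then a else b) else (if j = 1 then c else d))"

definition mmul :: "'a::comm_ring_1 mat2 \<Rightarrow> 'a mat2 \<Rightarrow> 'a mat2" where
  "mmul A B = (\<chi> i j. \<Sum>k\<in>UNIV. A $ i $ k * B $ k $ j)"

definition smul :: "'a::comm_ring_1 \<Rightarrow> 'a mat2 \<Rightarrow> 'a mat2" where
  "smul c A = (\<chi> i j. c * A $ i $ j)"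

definition mtrace :: "'a::comm_ring_1 mat2 \<Rightarrow> 'a" where
  "mtrace A = A $ 1 $ 1 + A $ 2 $ 2"

definition tform :: "'a::comm_ring_1 mat2 \<Rightarrow> 'a mat2 \<Rightarrow> 'a" where
  "tform u v = mtrace (mmul u v)"

definition sl2 :: "'a::comm_ring_1 mat2 set" where
  "sl2 = {A. mtrace A = 0}"

definition ex :: "'a::comm_ring_1 mat2" where "ex = mat2 1 0 0 (-1)"
definition ey :: "'a::comm_ring_1 mat2" where "ey = mat2 (-1) 2 0 1"
definition ez :: "'a::comm_ring_1 mat2" where "ez = mat2 (-1) 0 (-2) 1"

definition Lat :: "'a::comm_ring_1 mat2 set" where
  "Lat = {smul (of_int a) ex + smul (of_int b) ey + smul (of_int c) ez | a b c. True}"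

text \<open>Maps of sl_2 are represented extensionally (undefined outside sl_2), composed with compose.\<close>
definition IsomZ :: "('a::field_char_0 mat2 \<Rightarrow> 'a mat2) set" where
  "IsomZ = {\<phi>. \<phi> \<in> extensional sl2 \<and> bij_betw \<phi> sl2 sl2
     \<and> (\<forall>u\<in>sl2. \<forall>v\<in>sl2. \<phi> (u + v) = \<phi> u + \<phi> v)
     \<and> (\<forall>c. \<forall>u\<in>sl2. \<phi> (smul c u) = smul c (\<phi> u))
     \<and> (\<forall>u\<in>sl2. \<forall>v\<in>sl2. tform (\<phi> u) (\<phi> v) = tform u v)
     \<and> \<phi> ` Lat = Lat}"

definition Isom_group :: "('a::field_char_0 mat2 \<Rightarrow> 'a mat2) monoid" where
  "Isom_group = \<lparr>carrier = IsomZ, mult = (\<lambda>\<phi> \<psi>. compose sl2 \<phi> \<psi>), one = restrict id sl2\<rparr>"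

definition reflU :: "'a::field_char_0 mat2 \<Rightarrow> ('a mat2 \<Rightarrow> 'a mat2)" where
  "reflU u = restrict (\<lambda>v. v - smul (tform u v) u) sl2"

definition refl_gens :: "('a::field_char_0 mat2 \<Rightarrow> 'a mat2) set" where
  "refl_gens = {reflU ex, reflU ey, reflU ez}"

definition word_length :: "('g, 'b) monoid_scheme \<Rightarrow> 'g set \<Rightarrow> 'g \<Rightarrow> nat" where
  "word_length G S g = (LEAST n. \<exists>ws. length ws = n \<and> set ws \<subseteq> S \<and> foldr (\<otimes>\<^bsub>G\<^esub>) ws \<one>\<^bsub>G\<^esub> = g)"

definition Wgrp :: "('a::field_char_0 mat2 \<Rightarrow> 'a mat2) set" where
  "Wgrp = generate Isom_group refl_gens"

definition Wplus :: "('a::field_char_0 mat2 \<Rightarrow> 'a mat2) set" where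
  "Wplus = {g \<in> Wgrp. even (word_length Isom_group refl_gens g)}"

text \<open>(a,s) stands for r^a f^s, with f r f = r^{-1}.\<close>
definition dihedral_group :: "nat \<Rightarrow> (int \<times> bool) monoid" where
  "dihedral_group n = \<lparr>carrier = {0..<int n} \<times> UNIV,
     mult = (\<lambda>(a, s) (b, t). ((a + (if s then - b else b)) mod int n, s \<noteq> t)),
     one = (0, False)\<rparr>"

end

theory Submission
  imports Defs
begin

(* Writing v = a x + b y + c z identifies sl_2 with F^3, the lattice L with Z^3 and the trace
   form with 2 B, where B is the integral form with B(e_i,e_i) = 1 and B(e_i,e_j) = -1 (i ~= j).
   Hence Isom_Z(L) is the group of integer 3x3 matrices preserving B ("B-isometries"), and the
   generators r_x, r_y, r_z become the reflection matrices R0, R1, R2.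

   Reduction theory: rho = (1,1,1) satisfies B(rho,rho) = -3.  For a B-isometry M the vector
   +-M rho can be carried back to rho by reflections, each step strictly decreasing the
   coordinate sum.  An isometry fixing rho permutes the three roots e_i, so every B-isometry
   has a normal form  +-1 * (word in R0,R1,R2) * (one of 6 permutation matrices).

   We then define, intrinsically in terms of M rho and the first two columns of M, a map chi
   from B-isometries to Z_2 x D_6, compute it on normal forms, and deduce that it is a
   surjective homomorphism whose kernel is W^+ (on a reflection word of length n, chi has
   first component n mod 2, which also shows that the parity of the word length is
   well-defined).  The first isomorphism theorem concludes. *)

section \<open>Coordinates on sl_2\<close>

lemma two_cases: fixes i :: 2 shows "i = 1 \<or> i = 2"
proof (induct i)
  case (of_int z)
  then have "z = 0 \<or> z = 1" by fastforce
  then show ?case by auto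
qed

lemma sum_UNIV_2: "sum f (UNIV :: 2 set) = f 1 + f 2"
proof -
  have "(UNIV :: 2 set) = {1, 2}" using two_cases by auto
  then show ?thesis unfolding \<open>UNIV = {1, 2}\<close> by simp
qed

lemma mat2_nth [simp]:
  "mat2 a b c d $ 1 $ 1 = a" "mat2 a b c d $ 1 $ 2 = b"
  "mat2 a b c d $ 2 $ 1 = c" "mat2 a b c d $ 2 $ 2 = d"
  by (simp_all add: mat2_def)

lemma mat2_entries: "(A :: 'a mat2) = mat2 (A$1$1) (A$1$2) (A$2$1) (A$2$2)"
  unfolding mat2_def by (simp add: vec_eq_iff) (metis two_cases)

lemma mat2_eq_iff: "mat2 a b c d = mat2 a' b' c' d' \<longleftrightarrow> a = a' \<and> b = b' \<and> c = c' \<and> d = d'"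
  by (metis mat2_nth)

lemma mat2_add: "mat2 a b c d + mat2 a' b' c' d' = mat2 (a+a') (b+b') (c+c') (d+d')"
  by (subst mat2_entries) simp

lemma mat2_diff: "mat2 a b c d - mat2 a' b' c' d' = mat2 (a-a') (b-b') (c-c') (d-d')"
  by (subst mat2_entries) simp

lemma mat2_smul: "smul k (mat2 a b c d) = mat2 (k*a) (k*b) (k*c) (k*d)"
  by (subst mat2_entries) (simp add: smul_def)

lemma mat2_tform: "tform (mat2 a b c d) (mat2 a' b' c' d') = a*a' + b*c' + c*b' + d*d'"
  by (subst mat2_entries) (simp add: tform_def mmul_def mtrace_def sum_UNIV_2)

text \<open>Coordinates with respect to the equitable basis: (a,b,c) stands for a x + b y + c z.\<close>

type_synonym 'a triple = "'a \<times> 'a \<times> 'a"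

definition of_coords :: "'a::comm_ring_1 triple \<Rightarrow> 'a mat2" where
  "of_coords v = (case v of (a, b, c) \<Rightarrow> mat2 (a-b-c) (2*b) (-2*c) (-a+b+c))"

definition coords :: "'a::field mat2 \<Rightarrow> 'a triple" where
  "coords A = (A$1$1 + A$1$2/2 - A$2$1/2, A$1$2/2, -(A$2$1/2))"

fun add3 :: "'a::comm_ring_1 triple \<Rightarrow> 'a triple \<Rightarrow> 'a triple" where
  "add3 (a, b, c) (a', b', c') = (a+a', b+b', c+c')"

fun scale3 :: "'a::comm_ring_1 \<Rightarrow> 'a triple \<Rightarrow> 'a triple" where
  "scale3 k (a, b, c) = (k*a, k*b, k*c)"

fun of_int3 :: "int triple \<Rightarrow> 'a::comm_ring_1 triple" where
  "of_int3 (a, b, c) = (of_int a, of_int b, of_int c)"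

text \<open>The form B on coordinates; the trace form is 2 B (lemma tform_of_coords).\<close>
fun bform :: "'a::comm_ring_1 triple \<Rightarrow> 'a triple \<Rightarrow> 'a" where
  "bform (a, b, c) (a', b', c') = a*a' + b*b' + c*c' - a*b' - b*a' - a*c' - c*a' - b*c' - c*b'"

lemma of_coords_sl2 [simp]: "of_coords v \<in> sl2"
  by (cases v) (simp add: of_coords_def sl2_def mtrace_def)

lemma coords_of_coords [simp]: "coords (of_coords v) = (v :: 'a::field_char_0 triple)"
  by (cases v) (simp add: of_coords_def coords_def)

lemma of_coords_coords:
  assumes "A \<in> sl2" shows "of_coords (coords A) = (A :: 'a::field_char_0 mat2)"
proof -
  have "A$2$2 = - A$1$1" using assms by (simp add: sl2_def mtrace_def eq_neg_iff_add_eq_0 add.commute)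
  then show ?thesis
    by (subst (2) mat2_entries) (simp add: of_coords_def coords_def mat2_eq_iff field_simps)
qed

lemma of_coords_inj: "of_coords u = of_coords v \<longleftrightarrow> u = (v :: 'a::field_char_0 triple)"
  by (metis coords_of_coords)

lemma of_coords_add: "of_coords u + of_coords v = of_coords (add3 u v)"
  by (cases u; cases v) (simp add: of_coords_def mat2_add algebra_simps)

lemma of_coords_smul: "smul k (of_coords v) = of_coords (scale3 k v)"
  by (cases v) (simp add: of_coords_def mat2_smul algebra_simps)

lemma tform_of_coords: "tform (of_coords u) (of_coords v) = 2 * bform u v"
  by (cases u; cases v) (simp add: of_coords_def mat2_tform algebra_simps)

lemma basis_of_coords: "ex = of_coords (1,0,0)" "ey = of_coords (0,1,0)" "ez = of_coords (0,0,1)"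
  by (simp_all add: ex_def ey_def ez_def of_coords_def)

lemma of_int3_inj: "(of_int3 u :: 'a::field_char_0 triple) = of_int3 v \<longleftrightarrow> u = v"
  by (cases u; cases v) auto

lemma bform_of_int3: "bform (of_int3 u) (of_int3 v) = (of_int (bform u v) :: 'a::comm_ring_1)"
  by (cases u; cases v) simp

lemma Lat_coords: "Lat = of_coords ` range of_int3"
proof -
  have elem: "smul (of_int a) ex + smul (of_int b) ey + smul (of_int c) ez = of_coords (of_int3 (a,b,c))"
    for a b c
    by (simp add: basis_of_coords of_coords_smul of_coords_add)
  have "Lat = {of_coords (of_int3 (a,b,c)) | a b c. True}"
    unfolding Lat_def elem ..
  also have "\<dots> = of_coords ` range of_int3"
    by (auto simp del: of_int3.simps) (metis prod_cases3)
  finally show ?thesis .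
qed

lemma coords_add: "coords (A + B) = add3 (coords A) (coords (B :: 'a::field_char_0 mat2))"
  by (simp add: coords_def field_simps)

lemma coords_smul: "coords (smul c A) = scale3 c (coords (A :: 'a::field_char_0 mat2))"
  by (simp add: coords_def smul_def field_simps)

lemma sl2_add: "u \<in> sl2 \<Longrightarrow> v \<in> sl2 \<Longrightarrow> u + v \<in> sl2"
  by (simp add: sl2_def mtrace_def algebra_simps)

lemma sl2_smul: "u \<in> sl2 \<Longrightarrow> smul c u \<in> sl2"
  by (simp add: sl2_def mtrace_def smul_def distrib_left[symmetric])

section \<open>Integer 3x3 matrices and B-isometries\<close>

text \<open>M3 a b c d e f g h i is the integer matrix with rows (a,b,c), (d,e,f), (g,h,i); it acts
  on coordinate triples over any ring.\<close>
datatype zmat = M3 int int int int int int int int int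

fun mv :: "zmat \<Rightarrow> 'a::comm_ring_1 triple \<Rightarrow> 'a triple" where
  "mv (M3 a b c d e f g h i) (x, y, z) =
     (of_int a*x + of_int b*y + of_int c*z, of_int d*x + of_int e*y + of_int f*z,
      of_int g*x + of_int h*y + of_int i*z)"

fun mmul3 :: "zmat \<Rightarrow> zmat \<Rightarrow> zmat" where
  "mmul3 (M3 a b c d e f g h i) (M3 a' b' c' d' e' f' g' h' i') =
     M3 (a*a'+b*d'+c*g') (a*b'+b*e'+c*h') (a*c'+b*f'+c*i')
        (d*a'+e*d'+f*g') (d*b'+e*e'+f*h') (d*c'+e*f'+f*i')
        (g*a'+h*d'+i*g') (g*b'+h*e'+i*h') (g*c'+h*f'+i*i')"

definition id3 :: zmat where "id3 = M3 1 0 0 0 1 0 0 0 1"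

lemma mv_mmul3: "mv (mmul3 M N) v = mv M (mv N v)"
  by (cases M; cases N; cases v) (simp add: algebra_simps)

lemma mv_id3 [simp]: "mv id3 v = v"
  by (cases v) (simp add: id3_def)

lemma mmul3_id3 [simp]: "mmul3 id3 M = M" "mmul3 M id3 = M"
  by (cases M; simp add: id3_def)+

lemma mmul3_assoc: "mmul3 (mmul3 A B) C = mmul3 A (mmul3 B C)"
  by (cases A; cases B; cases C) (simp add: algebra_simps)

lemma mv_add3: "mv M (add3 u v) = add3 (mv M u) (mv M v)"
  by (cases M; cases u; cases v) (simp add: algebra_simps)

lemma mv_scale3: "mv M (scale3 k v) = scale3 k (mv M v)"
  by (cases M; cases v) (simp add: algebra_simps)

lemma mv_of_int3: "mv M (of_int3 v) = (of_int3 (mv M v) :: 'a::comm_ring_1 triple)"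
  by (cases M; cases v) simp

fun of_cols :: "int triple \<Rightarrow> int triple \<Rightarrow> int triple \<Rightarrow> zmat" where
  "of_cols (a, b, c) (d, e, f) (g, h, i) = M3 a d g b e h c f i"

lemma zmat_of_cols: "M = of_cols (mv M (1,0,0)) (mv M (0,1,0)) (mv M (0,0,1))"
  by (cases M) simp

lemma mv_of_cols:
  "mv (of_cols c0 c1 c2) (x, y, z) = add3 (add3 (scale3 x (of_int3 c0)) (scale3 y (of_int3 c1))) (scale3 z (of_int3 c2))"
  by (cases c0; cases c1; cases c2) (simp add: algebra_simps)

lemma mv_of_cols_units:
  "mv (of_cols c0 c1 c2) (1,0,0) = (c0 :: int triple)"
  "mv (of_cols c0 c1 c2) (0,1,0) = (c1 :: int triple)"
  by (cases c0; cases c1; cases c2; simp)+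

definition B_isometry :: "zmat \<Rightarrow> bool" where
  "B_isometry M \<longleftrightarrow> (\<forall>u v :: int triple. bform (mv M u) (mv M v) = bform u v)"

lemma bform_mv_expand:
  "bform (mv M (x::'a::comm_ring_1, y, z)) (mv M (x', y', z')) =
     x*x' * of_int (bform (mv M (1,0,0)) (mv M (1,0,0) :: int triple)) +
     x*y' * of_int (bform (mv M (1,0,0)) (mv M (0,1,0) :: int triple)) +
     x*z' * of_int (bform (mv M (1,0,0)) (mv M (0,0,1) :: int triple)) +
     y*x' * of_int (bform (mv M (0,1,0)) (mv M (1,0,0) :: int triple)) +
     y*y' * of_int (bform (mv M (0,1,0)) (mv M (0,1,0) :: int triple)) +
     y*z' * of_int (bform (mv M (0,1,0)) (mv M (0,0,1) :: int triple)) +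
     z*x' * of_int (bform (mv M (0,0,1)) (mv M (1,0,0) :: int triple)) +
     z*y' * of_int (bform (mv M (0,0,1)) (mv M (0,1,0) :: int triple)) +
     z*z' * of_int (bform (mv M (0,0,1)) (mv M (0,0,1) :: int triple))"
  by (cases M) (simp add: algebra_simps)

text \<open>Hence a B-isometry preserves B over every commutative ring, in particular over F.\<close>
lemma B_isometry_bform:
  assumes "B_isometry M"
  shows "bform (mv M u) (mv M v) = (bform u v :: 'a::comm_ring_1)"
proof -
  obtain x y z where u: "u = (x, y, z)" by (cases u)
  obtain x' y' z' where v: "v = (x', y', z')" by (cases v)
  have "bform (mv M u) (mv M v) = bform (mv id3 u) (mv id3 (v :: 'a triple))"
    unfolding u v
    by (subst (1 2) bform_mv_expand) (use assms in \<open>simp only: B_isometry_def mv_id3\<close>)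
  then show ?thesis by simp
qed

lemma B_isometry_mmul3: "B_isometry M \<Longrightarrow> B_isometry N \<Longrightarrow> B_isometry (mmul3 M N)"
  unfolding B_isometry_def mv_mmul3 by metis

lemma B_isometry_id3: "B_isometry id3"
  by (simp add: B_isometry_def)

section \<open>Isometries of sl_2 induced by integer matrices\<close>

definition lin :: "zmat \<Rightarrow> 'a::field_char_0 mat2 \<Rightarrow> 'a mat2" where
  "lin M = restrict (\<lambda>A. of_coords (mv M (coords A))) sl2"

lemma lin_of_coords [simp]: "lin M (of_coords v) = of_coords (mv M v)"
  by (simp add: lin_def)

lemma lin_mmul3: "compose sl2 (lin M) (lin N) = (lin (mmul3 M N) :: 'a::field_char_0 mat2 \<Rightarrow> _)"
  unfolding lin_def compose_def by (rule restrict_ext) (simp add: mv_mmul3)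

lemma lin_id3: "lin id3 = (restrict id sl2 :: 'a::field_char_0 mat2 \<Rightarrow> _)"
  unfolding lin_def by (rule restrict_ext) (simp add: of_coords_coords)

lemma lin_inj:
  assumes "(lin M :: 'a::field_char_0 mat2 \<Rightarrow> _) = lin N"
  shows "M = N"
proof -
  have "(mv M e :: int triple) = mv N e" for e
  proof -
    have "(lin M :: 'a mat2 \<Rightarrow> _) (of_coords (of_int3 e)) = lin N (of_coords (of_int3 e))"
      using assms by simp
    then have "(of_int3 (mv M e) :: 'a triple) = of_int3 (mv N e)"
      by (simp add: mv_of_int3 of_coords_inj del: of_int3.simps)
    then show ?thesis using of_int3_inj by blast
  qed
  then show ?thesis by (subst zmat_of_cols, subst (2) zmat_of_cols) simp
qed

lemma lin_IsomZ:
  assumes iso: "B_isometry M" and inv: "mmul3 M N = id3" "mmul3 N M = id3"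
  shows "(lin M :: 'a::field_char_0 mat2 \<Rightarrow> _) \<in> IsomZ"
proof -
  have left_inv: "lin N' (lin M' A) = A" if "A \<in> sl2" "mmul3 N' M' = id3"
    for A :: "'a mat2" and M' N'
    using that by (simp add: lin_def mv_mmul3[symmetric] of_coords_coords)
  have lat: "(lin K :: 'a mat2 \<Rightarrow> _) ` Lat = of_coords ` of_int3 ` range (mv K)" for K
    unfolding Lat_coords image_image by (simp add: mv_of_int3 del: of_int3.simps)
  have "mv M (mv N t) = t" for t :: "int triple"
    using mv_mmul3[of M N t] inv by simp
  then have "range (mv M) = (UNIV :: int triple set)" by (rule surjI)
  then have "(lin M :: 'a mat2 \<Rightarrow> _) ` Lat = Lat" unfolding lat by (simp add: Lat_coords)
  moreover have "bij_betw (lin M :: 'a mat2 \<Rightarrow> _) sl2 sl2"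
    by (rule bij_betw_byWitness[where f' = "lin N"]) (use inv left_inv in \<open>auto simp: lin_def\<close>)
  moreover have "lin M (u + v) = lin M u + lin M v" if "u \<in> sl2" "v \<in> sl2" for u v :: "'a mat2"
    using that by (simp add: lin_def sl2_add coords_add mv_add3 of_coords_add)
  moreover have "lin M (smul c u) = smul c (lin M u)" if "u \<in> sl2" for c and u :: "'a mat2"
    using that by (simp add: lin_def sl2_smul coords_smul mv_scale3 of_coords_smul)
  moreover have "tform (lin M u) (lin M v) = tform u v" if "u \<in> sl2" "v \<in> sl2" for u v :: "'a mat2"
  proof -
    have "tform (lin M u) (lin M v) = tform (of_coords (mv M (coords u))) (of_coords (mv M (coords v)))"
      using that by (simp add: lin_def)
    also have "\<dots> = tform (of_coords (coords u)) (of_coords (coords v))"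
      by (simp add: tform_of_coords B_isometry_bform[OF iso])
    finally show ?thesis using that by (simp add: of_coords_coords)
  qed
  moreover have "(lin M :: 'a mat2 \<Rightarrow> _) \<in> extensional sl2" by (simp add: lin_def)
  ultimately show ?thesis unfolding IsomZ_def by blast
qed

lemma linear_on_coords:
  assumes add: "\<And>u v. u \<in> sl2 \<Longrightarrow> v \<in> sl2 \<Longrightarrow> \<phi> (u + v) = \<phi> u + \<phi> v"
    and hom: "\<And>c u. u \<in> sl2 \<Longrightarrow> \<phi> (smul c u) = smul c (\<phi> u)"
  shows "\<phi> (of_coords (x, y, z)) =
    smul x (\<phi> (of_coords (1,0,0))) + smul y (\<phi> (of_coords (0,1,0))) + smul z (\<phi> (of_coords (0,0,1::'a::comm_ring_1)))"
proof -
  have "of_coords (x, y, z) =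
      smul x (of_coords (1,0,0)) + smul y (of_coords (0,1,0)) + smul z (of_coords (0,0,1::'a))"
    by (simp add: of_coords_smul of_coords_add)
  then show ?thesis by (simp add: add hom sl2_add sl2_smul)
qed

text \<open>An integer matrix whose induced map preserves the trace form is a B-isometry,
  since the trace form is 2 B and F has characteristic zero.\<close>
lemma lin_preserving_tform_B_isometry:
  assumes "\<And>u v. u \<in> sl2 \<Longrightarrow> v \<in> sl2 \<Longrightarrow> tform ((lin M :: 'a::field_char_0 mat2 \<Rightarrow> _) u) (lin M v) = tform u v"
  shows "B_isometry M"
  unfolding B_isometry_def
proof (intro allI)
  fix u v :: "int triple"
  have "tform (lin M (of_coords (of_int3 u))) (lin M (of_coords (of_int3 v))) =
      tform (of_coords (of_int3 u)) (of_coords (of_int3 v) :: 'a mat2)"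
    by (rule assms) simp_all
  then have "2 * (of_int (bform (mv M u) (mv M v)) :: 'a) = 2 * of_int (bform u v)"
    by (simp add: tform_of_coords mv_of_int3 bform_of_int3 del: of_int3.simps bform.simps)
  then show "bform (mv M u) (mv M v) = bform u v" by simp
qed

text \<open>Conversely every element of Isom_Z(L) is induced by a B-isometry: its matrix has the
  (integral) coordinates of the images of x, y, z as columns.\<close>
lemma IsomZ_is_lin:
  fixes \<phi> :: "'a::field_char_0 mat2 \<Rightarrow> 'a mat2"
  assumes "\<phi> \<in> IsomZ"
  shows "\<exists>M. B_isometry M \<and> \<phi> = lin M"
proof -
  note \<phi> = assms[unfolded IsomZ_def mem_Collect_eq]
  have "\<exists>c. \<phi> (of_coords (of_int3 t)) = of_coords (of_int3 c)" for t
  proof -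
    have "\<phi> (of_coords (of_int3 t)) \<in> \<phi> ` Lat" by (simp add: Lat_coords del: of_int3.simps)
    then have "\<phi> (of_coords (of_int3 t)) \<in> of_coords ` range of_int3"
      using \<phi> by (simp only: Lat_coords)
    then show ?thesis by blast
  qed
  then obtain col where col: "\<And>t. \<phi> (of_coords (of_int3 t)) = of_coords (of_int3 (col t))" by metis
  define M where "M = of_cols (col (1,0,0)) (col (0,1,0)) (col (0,0,1))"
  have "\<phi> A = lin M A" if A: "A \<in> sl2" for A
  proof -
    obtain x y z where xyz: "coords A = (x, y, z)" by (cases "coords A")
    have "\<phi> A = \<phi> (of_coords (x, y, z))" using of_coords_coords[OF A] xyz by simp
    also have "\<dots> = of_coords (mv M (x, y, z))"
      using linear_on_coords[of \<phi> x y z] col[of "(1,0,0)"] col[of "(0,1,0)"] col[of "(0,0,1)"] \<phi>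
      by (simp add: M_def mv_of_cols of_coords_smul of_coords_add)
    finally show ?thesis using A xyz by (simp add: lin_def)
  qed
  then have \<phi>_lin: "\<phi> = lin M"
    using \<phi> by (intro extensionalityI[where A = sl2]) (simp_all add: lin_def)
  have "B_isometry M"
    using \<phi> by (intro lin_preserving_tform_B_isometry) (auto simp: \<phi>_lin)
  then show ?thesis using \<phi>_lin by blast
qed

section \<open>Reflections and reduction to the vector rho = (1,1,1)\<close>

text \<open>The matrices of r_x, r_y, r_z; they are indexed cyclically by natural numbers.\<close>
definition R0 :: zmat where "R0 = M3 (-1) 2 2 0 1 0 0 0 1"
definition R1 :: zmat where "R1 = M3 1 0 0 2 (-1) 2 0 0 1"
definition R2 :: zmat where "R2 = M3 1 0 0 0 1 0 2 2 (-1)"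

definition refl_mat :: "nat \<Rightarrow> zmat" where
  "refl_mat i = (if i mod 3 = 0 then R0 else if i mod 3 = 1 then R1 else R2)"

fun refl_word :: "nat list \<Rightarrow> zmat" where
  "refl_word [] = id3"
| "refl_word (i # ws) = mmul3 (refl_mat i) (refl_word ws)"

text \<open>Each reflection is an involution, so the reversed word inverts a reflection word.\<close>
lemma refl_word_append: "refl_word (xs @ ys) = mmul3 (refl_word xs) (refl_word ys)"
  by (induction xs) (simp_all add: mmul3_assoc)

lemma refl_mat_mod: "refl_mat (i mod 3) = refl_mat i"
  by (simp add: refl_mat_def)

lemma refl_mat_involution: "mmul3 (refl_mat i) (refl_mat i) = id3"
  by (simp add: refl_mat_def R0_def R1_def R2_def id3_def)

lemma refl_word_rev: "mmul3 (refl_word (rev ws)) (refl_word ws) = id3"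
proof (induction ws)
  case Nil then show ?case by simp
next
  case (Cons i ws)
  have "mmul3 (refl_word (rev (i # ws))) (refl_word (i # ws)) =
      mmul3 (refl_word (rev ws)) (mmul3 (mmul3 (refl_mat i) (refl_mat i)) (refl_word ws))"
    by (simp add: refl_word_append mmul3_assoc)
  also have "\<dots> = id3" using Cons by (simp add: refl_mat_involution)
  finally show ?case .
qed

lemma B_isometry_refl_mat: "B_isometry (refl_mat i)"
  unfolding B_isometry_def refl_mat_def R0_def R1_def R2_def by (auto simp: algebra_simps)

lemma B_isometry_refl_word: "B_isometry (refl_word ws)"
  by (induction ws) (simp_all add: B_isometry_id3 B_isometry_mmul3 B_isometry_refl_mat)

text \<open>The coordinate sum; the descent below strictly decreases it.\<close>
fun coord_sum :: "int triple \<Rightarrow> int" where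
  "coord_sum (a, b, c) = a + b + c"

lemma mv_R0: "mv R0 (a, b, c) = (-a + 2*b + 2*c, b, (c::int))" by (simp add: R0_def)
lemma mv_R1: "mv R1 (a, b, c) = (a, 2*a - b + 2*c, (c::int))" by (simp add: R1_def)
lemma mv_R2: "mv R2 (a, b, c) = (a, b, 2*a + 2*b - (c::int))" by (simp add: R2_def)

text \<open>In the coordinates t0 = b+c-a, t1 = a+c-b, t2 = a+b-c of (a,b,c) the form is
  -B(v,v) = t0 t1 + t1 t2 + t0 t2, and r_x, r_y, r_z change the coordinate sum by 2 t0, 2 t1, 2 t2.\<close>
lemma bform_chamber_coords:
  "bform (a, b, c) (a, b, c) = - ((b+c-a)*(a+c-b) + (a+c-b)*(a+b-c) + (b+c-a)*(a+b-(c::int)))"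
  by (simp add: algebra_simps)

text \<open>The key inequality: a negative chamber coordinate p of a vector of norm -3 and positive
  coordinate sum is small, in the sense that reflecting in it keeps the sum positive.\<close>
lemma negative_chamber_coordinate:
  fixes p q r :: int
  assumes "p < 0" "p + q + r > 0" "p*q + q*r + p*r = 3"
  shows "3*p + q + r > 0"
proof -
  define a where "a = -p"
  have a: "a > 0" using assms(1) by (simp add: a_def)
  have prod: "(q - a) * (r - a) = 3 + a*a" using assms(3) by (simp add: a_def algebra_simps)
  have sum: "q + r > a" using assms(2) by (simp add: a_def)
  have amgm: "4 * (P * Q) \<le> (P + Q) * (P + Q)" for P Q :: int
  proof -
    have "0 \<le> (P - Q) * (P - Q)" by simp
    then show ?thesis by (simp add: algebra_simps)
  qed
  have "q - a > 0 \<and> r - a > 0"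
  proof (rule ccontr)
    assume "\<not> ?thesis"
    moreover have "(q - a) * (r - a) > 0" using prod a by (simp add: add_pos_nonneg)
    ultimately have neg: "a - q > 0" "a - r > 0"
      by (auto simp: zero_less_mult_iff)
    have "(a - q) + (a - r) < a" using sum by simp
    then have "((a - q) + (a - r)) * ((a - q) + (a - r)) < a * a"
      using neg by (simp add: mult_strict_mono)
    moreover have "(a - q) * (a - r) = 3 + a*a" using prod by (simp add: algebra_simps)
    ultimately show False using amgm[of "a - q" "a - r"] a by (smt (verit) mult_pos_pos)
  qed
  then have pos: "q - a > 0" "r - a > 0" by auto
  have "(q - a) + (r - a) > 2 * a"
  proof (rule ccontr)
    assume "\<not> ?thesis"
    then have le: "(q - a) + (r - a) \<le> 2 * a" by simp
    have "((q - a) + (r - a)) * ((q - a) + (r - a)) \<le> (2*a) * (2*a)"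
      by (rule mult_mono[OF le le]) (use pos a in auto)
    then show False using amgm[of "q - a" "r - a"] prod by simp
  qed
  then show ?thesis using a by (simp add: a_def)
qed

lemma refl_keeps_sum_positive:
  assumes "bform v v = -3" "coord_sum v > 0"
  shows "coord_sum (mv (refl_mat i) v) > 0"
proof -
  obtain a b c where v: "v = (a, b, c)" by (cases v)
  define t0 where "t0 = b+c-a"
  define t1 where "t1 = a+c-b"
  define t2 where "t2 = a+b-c"
  have B: "t0*t1 + t1*t2 + t0*t2 = 3"
    using assms(1) unfolding v bform_chamber_coords t0_def t1_def t2_def by simp
  have S: "t0 + t1 + t2 > 0" using assms(2) by (simp add: v t0_def t1_def t2_def)
  have key: "3*p + q + r > 0" if "p + q + r > 0" "p*q + q*r + p*r = 3" for p q r :: int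
    using negative_chamber_coordinate[of p q r] that by (cases "p < 0") auto
  consider "i mod 3 = 0" | "i mod 3 = 1" | "i mod 3 = 2" by linarith
  then show ?thesis
  proof cases
    case 1
    have "coord_sum (mv (refl_mat i) v) = 3*t0 + t1 + t2"
      by (simp add: 1 refl_mat_def mv_R0 v t0_def t1_def t2_def)
    then show ?thesis using key[of t0 t1 t2] B S by simp
  next
    case 2
    have "coord_sum (mv (refl_mat i) v) = 3*t1 + t0 + t2"
      by (simp add: 2 refl_mat_def mv_R1 v t0_def t1_def t2_def)
    then show ?thesis using key[of t1 t0 t2] B S by (simp add: algebra_simps)
  next
    case 3
    have "coord_sum (mv (refl_mat i) v) = 3*t2 + t0 + t1"
      by (simp add: 3 refl_mat_def mv_R2 v t0_def t1_def t2_def)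
    then show ?thesis using key[of t2 t0 t1] B S by (simp add: algebra_simps)
  qed
qed

lemma refl_word_keeps_sum_positive:
  assumes "bform v v = -3" "coord_sum v > 0"
  shows "coord_sum (mv (refl_word ws) v) > 0 \<and> bform (mv (refl_word ws) v) (mv (refl_word ws) v) = -3"
proof (induction ws)
  case Nil then show ?case using assms by simp
next
  case (Cons i ws)
  then show ?case
    using refl_keeps_sum_positive[of "mv (refl_word ws) v" i]
      B_isometry_bform[OF B_isometry_refl_mat[of i], of "mv (refl_word ws) v" "mv (refl_word ws) v"]
    by (simp add: mv_mmul3 del: bform.simps)
qed

text \<open>The fundamental chamber: rho is the only norm -3 vector with all chamber coordinates
  non-negative (these coordinates have the same parity and cannot vanish).\<close>
lemma chamber_rho:
  fixes a b c :: int
  assumes "bform (a, b, c) (a, b, c) = -3" "b+c-a \<ge> 0" "a+c-b \<ge> 0" "a+b-c \<ge> 0"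
  shows "(a, b, c) = (1, 1, 1)"
proof -
  define t0 where "t0 = b+c-a"
  define t1 where "t1 = a+c-b"
  define t2 where "t2 = a+b-c"
  have B: "t0*t1 + t1*t2 + t0*t2 = 3"
    using assms(1) unfolding bform_chamber_coords t0_def t1_def t2_def by simp
  have nonneg: "t0 \<ge> 0" "t1 \<ge> 0" "t2 \<ge> 0" using assms by (auto simp: t0_def t1_def t2_def)
  have parity: "even (t0 - t1)" "even (t1 - t2)" "even (t0 - t2)"
    unfolding t0_def t1_def t2_def by presburger+
  have no_zero: False if "x = 0" "even (x - y)" "even (x - z)" "x*y + y*z + x*z = (3::int)" for x y z
  proof -
    have "even y" "even z" using that by simp_all
    then obtain y' z' where "y = 2*y'" "z = 2*z'" by (metis evenE)
    then have "4*(y'*z') = 3" using that by (simp add: algebra_simps)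
    then show False by presburger
  qed
  have "t0 \<noteq> 0" using no_zero[of t0 t1 t2] B parity by auto
  moreover have "t1 \<noteq> 0" using no_zero[of t1 t0 t2] B parity by (auto simp: algebra_simps dvd_diff_commute)
  moreover have "t2 \<noteq> 0" using no_zero[of t2 t0 t1] B parity by (auto simp: algebra_simps dvd_diff_commute)
  ultimately have ge: "t0 \<ge> 1" "t1 \<ge> 1" "t2 \<ge> 1" using nonneg by auto
  have prod_ge: "x*y \<ge> x" "x*y \<ge> 1" if "x \<ge> 1" "y \<ge> (1::int)" for x y
    using that by (metis mult.right_neutral mult_left_mono order.trans zero_le_one)+
  have "t0*t1 = 1" "t1*t2 = 1" "t0*t2 = 1"
    using prod_ge[OF ge(1) ge(2)] prod_ge[OF ge(2) ge(3)] prod_ge[OF ge(1) ge(3)] B by linarith+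
  then have "t0 = 1" "t1 = 1" "t2 = 1"
    using prod_ge[OF ge(1) ge(2)] prod_ge[OF ge(2) ge(3)] prod_ge[OF ge(2) ge(1)] ge
    by (simp_all add: mult.commute)
  then show ?thesis by (simp add: t0_def t1_def t2_def)
qed

text \<open>Descent: a norm -3 vector with positive coordinate sum is carried to rho by reflections;
  while some chamber coordinate is negative, the corresponding reflection lowers the sum.\<close>
lemma descent_to_rho:
  "bform v v = -3 \<Longrightarrow> coord_sum v > 0 \<Longrightarrow> \<exists>ws. mv (refl_word ws) v = (1,1,1)"
proof (induction "nat (coord_sum v)" arbitrary: v rule: less_induct)
  case less
  obtain a b c where v: "v = (a, b, c)" by (cases v)
  have reduce: "\<exists>ws. mv (refl_word ws) v = (1,1,1)"
    if lt: "coord_sum (mv (refl_mat i) v) < coord_sum v" for i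
  proof -
    have pos: "coord_sum (mv (refl_mat i) v) > 0" using refl_keeps_sum_positive less.prems by blast
    have norm: "bform (mv (refl_mat i) v) (mv (refl_mat i) v) = -3"
      using B_isometry_bform[OF B_isometry_refl_mat[of i], of v v] less.prems by (simp del: bform.simps)
    have "nat (coord_sum (mv (refl_mat i) v)) < nat (coord_sum v)" using lt pos by simp
    from less.hyps[OF this norm pos] obtain ws where "mv (refl_word ws) (mv (refl_mat i) v) = (1,1,1)"
      by blast
    then have "mv (refl_word (ws @ [i])) v = (1,1,1)" by (simp add: refl_word_append mv_mmul3)
    then show ?thesis by blast
  qed
  consider "b+c-a < 0" | "a+c-b < 0" | "a+b-c < 0" | "b+c-a \<ge> 0 \<and> a+c-b \<ge> 0 \<and> a+b-c \<ge> 0"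
    by linarith
  then show ?case
  proof cases
    case 1
    then show ?thesis by (intro reduce[of 0]) (simp add: v refl_mat_def mv_R0)
  next
    case 2
    then show ?thesis by (intro reduce[of 1]) (simp add: v refl_mat_def mv_R1)
  next
    case 3
    then show ?thesis by (intro reduce[of 2]) (simp add: v refl_mat_def mv_R2)
  next
    case 4
    then have "mv (refl_word []) v = (1,1,1)" using chamber_rho[of a b c] less.prems v by simp
    then show ?thesis by blast
  qed
qed

section \<open>Normal form of B-isometries\<close>

lemma square_le_2: "(x::int) * x \<le> 2 \<Longrightarrow> -1 \<le> x \<and> x \<le> 1"
proof (rule ccontr)
  assume x: "x * x \<le> 2" "\<not> (-1 \<le> x \<and> x \<le> 1)"
  have square: "2 * 2 \<le> y * y" if "2 \<le> y" for y :: int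
    using mult_mono[OF that that] that by simp
  from x(2) have "2 \<le> x \<or> 2 \<le> -x" by linarith
  then have "2 * 2 \<le> x * x" using square[of x] square[of "-x"] by auto
  then show False using x(1) by simp
qed

lemma roots_at_rho:
  assumes "bform v v = (1::int)" "bform v (1,1,1) = -1"
  shows "v = (1,0,0) \<or> v = (0,1,0) \<or> v = (0,0,1)"
proof -
  obtain a b c where v: "v = (a, b, c)" by (cases v)
  have c: "c = 1 - a - b" using assms(2) by (simp add: v algebra_simps)
  have e: "a*a + a*b + b*b = a + b" using assms(1) unfolding v c by (simp add: algebra_simps)
  have "(a-1)*(a-1) + (b-1)*(b-1) + (a+b)*(a+b) = 2" using e by (simp add: algebra_simps)
  then have "(a-1)*(a-1) \<le> 2" "(b-1)*(b-1) \<le> 2" by (smt (verit) zero_le_square)+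
  then have "a \<in> {0,1,2}" "b \<in> {0,1,2}" using square_le_2 by fastforce+
  then show ?thesis using e unfolding v c by auto
qed

lemma less_3_cases: "k < (3::nat) \<Longrightarrow> k = 0 \<or> k = 1 \<or> k = 2" by auto

definition unit3 :: "nat \<Rightarrow> int triple" where
  "unit3 i = (if i = 0 then (1,0,0) else if i = 1 then (0,1,0) else (0,0,1))"

text \<open>The six permutation matrices: perm_mat k u maps e_j to e_(k + u j), for k < 3 and
  u in {1, 2}; u = 1 gives the rotations, u = 2 the transpositions.\<close>
definition perm_mat :: "nat \<Rightarrow> nat \<Rightarrow> zmat" where
  "perm_mat k u = of_cols (unit3 (k mod 3)) (unit3 ((u + k) mod 3)) (unit3 ((2*u + k) mod 3))"

text \<open>Permutation matrices fix rho, are B-isometries, and compose like the affine maps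
  j |-> k + u j of Z/3; the identity is perm_mat 0 1.\<close>
lemma perm_mat_id: "perm_mat 0 1 = id3" "perm_mat 0 (Suc 0) = id3"
  by (simp_all add: perm_mat_def unit3_def id3_def)

lemma perm_mat_of_cols:
  assumes "c0 \<in> {(1,0,0),(0,1,0),(0,0,1)}" "c1 \<in> {(1,0,0),(0,1,0),(0,0,1)}"
    "c2 \<in> {(1,0,0),(0,1,0),(0,0,1)}" "c0 \<noteq> c1" "c1 \<noteq> c2" "c0 \<noteq> c2"
  shows "\<exists>k u. k < 3 \<and> (u = 1 \<or> u = 2) \<and> of_cols c0 c1 c2 = perm_mat k u"
proof -
  have "of_cols c0 c1 c2 \<in> {perm_mat 0 1, perm_mat 1 1, perm_mat 2 1, perm_mat 0 2, perm_mat 1 2, perm_mat 2 2}"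
    using assms by (auto simp: perm_mat_def unit3_def)
  then show ?thesis
    by (elim insertE emptyE; intro exI conjI; assumption?) simp_all
qed

lemma perm_mat_rho: "k < 3 \<Longrightarrow> u = 1 \<or> u = 2 \<Longrightarrow> mv (perm_mat k u) (1,1,1) = ((1,1,1) :: int triple)"
  by (drule less_3_cases) (elim disjE; simp add: perm_mat_def unit3_def)

lemma B_isometry_perm_mat: "k < 3 \<Longrightarrow> u = 1 \<or> u = 2 \<Longrightarrow> B_isometry (perm_mat k u)"
  unfolding B_isometry_def
  by (drule less_3_cases) (elim disjE; auto simp: perm_mat_def unit3_def algebra_simps)

lemma perm_mat_mult:
  "k < 3 \<Longrightarrow> u = 1 \<or> u = 2 \<Longrightarrow> k' < 3 \<Longrightarrow> u' = 1 \<or> u' = 2 \<Longrightarrow>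
   mmul3 (perm_mat k u) (perm_mat k' u') = perm_mat ((k + u*k') mod 3) ((u*u') mod 3)"
  by (drule less_3_cases, drule less_3_cases[of k']) (elim disjE; simp add: perm_mat_def unit3_def)

lemma perm_mat_refl_mat:
  assumes "k < 3" "u = 1 \<or> u = 2"
  shows "mmul3 (perm_mat k u) (refl_mat i) = mmul3 (refl_mat ((u*i + k) mod 3)) (perm_mat k u)"
proof -
  have small: "mmul3 (perm_mat k u) (refl_mat j) = mmul3 (refl_mat ((u*j + k) mod 3)) (perm_mat k u)"
    if "j < 3" for j
    using assms less_3_cases[OF assms(1)] less_3_cases[OF that]
    by (elim disjE; simp add: perm_mat_def unit3_def refl_mat_def R0_def R1_def R2_def)
  have "(u*i + k) mod 3 = (u*(i mod 3) + k) mod 3" by (metis mod_add_left_eq mod_mult_right_eq)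
  then show ?thesis using small[of "i mod 3"] by (simp add: refl_mat_mod)
qed

lemma perm_mat_refl_word:
  assumes "k < 3" "u = 1 \<or> u = 2"
  shows "mmul3 (perm_mat k u) (refl_word ws) = mmul3 (refl_word (map (\<lambda>i. (u*i + k) mod 3) ws)) (perm_mat k u)"
proof (induction ws)
  case Nil then show ?case by simp
next
  case (Cons i ws)
  have "mmul3 (perm_mat k u) (refl_word (i # ws)) = mmul3 (mmul3 (perm_mat k u) (refl_mat i)) (refl_word ws)"
    by (simp add: mmul3_assoc)
  also have "\<dots> = mmul3 (refl_mat ((u*i + k) mod 3)) (mmul3 (perm_mat k u) (refl_word ws))"
    by (simp add: perm_mat_refl_mat[OF assms] mmul3_assoc)
  also have "\<dots> = mmul3 (refl_word (map (\<lambda>i. (u*i + k) mod 3) (i # ws))) (perm_mat k u)"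
    by (simp add: Cons mmul3_assoc)
  finally show ?case .
qed

definition scalar3 :: "int \<Rightarrow> zmat" where "scalar3 e = M3 e 0 0 0 e 0 0 0 e"

lemma mv_scalar3: "mv (scalar3 e) (a, b, c) = (e*a, e*b, (e::int)*c)"
  by (simp add: scalar3_def)

lemma B_isometry_scalar3: "e = 1 \<or> e = -1 \<Longrightarrow> B_isometry (scalar3 e)"
  by (auto simp: B_isometry_def scalar3_def)

lemma scalar3_mult: "mmul3 (scalar3 e) (scalar3 e') = scalar3 (e*e')"
  by (simp add: scalar3_def)

lemma scalar3_one: "scalar3 1 = id3"
  by (simp add: scalar3_def id3_def)

lemma scalar3_central: "mmul3 A (mmul3 (scalar3 e) X) = mmul3 (scalar3 e) (mmul3 A X)"
proof -
  have "mmul3 (scalar3 e) A = mmul3 A (scalar3 e)" by (cases A) (simp add: scalar3_def algebra_simps)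
  then show ?thesis by (metis mmul3_assoc)
qed

definition nf :: "int \<Rightarrow> nat list \<Rightarrow> nat \<Rightarrow> nat \<Rightarrow> zmat" where
  "nf e ws k u = mmul3 (scalar3 e) (mmul3 (refl_word ws) (perm_mat k u))"

abbreviation nf_params :: "int \<Rightarrow> nat \<Rightarrow> nat \<Rightarrow> bool" where
  "nf_params e k u \<equiv> (e = 1 \<or> e = -1) \<and> k < 3 \<and> (u = 1 \<or> u = 2)"

lemma B_isometry_nf: "nf_params e k u \<Longrightarrow> B_isometry (nf e ws k u)"
  unfolding nf_def
  by (intro B_isometry_mmul3 B_isometry_scalar3 B_isometry_refl_word B_isometry_perm_mat) auto

text \<open>Normal forms multiply like the elements of {+-1} x (W semidirect S_3).\<close>
lemma nf_mult:
  assumes "k1 < 3" "u1 = 1 \<or> u1 = 2" "k2 < 3" "u2 = 1 \<or> u2 = 2"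
  shows "mmul3 (nf e1 ws1 k1 u1) (nf e2 ws2 k2 u2) =
    nf (e1*e2) (ws1 @ map (\<lambda>i. (u1*i + k1) mod 3) ws2) ((k1 + u1*k2) mod 3) ((u1*u2) mod 3)"
proof -
  have "mmul3 (nf e1 ws1 k1 u1) (nf e2 ws2 k2 u2) = mmul3 (scalar3 e1) (mmul3 (refl_word ws1)
      (mmul3 (perm_mat k1 u1) (mmul3 (scalar3 e2) (mmul3 (refl_word ws2) (perm_mat k2 u2)))))"
    by (simp add: nf_def mmul3_assoc)
  also have "\<dots> = mmul3 (mmul3 (scalar3 e1) (scalar3 e2))
      (mmul3 (refl_word ws1) (mmul3 (mmul3 (perm_mat k1 u1) (refl_word ws2)) (perm_mat k2 u2)))"
    by (simp only: scalar3_central[of "perm_mat k1 u1"] scalar3_central[of "refl_word ws1"] mmul3_assoc)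
  also have "\<dots> = nf (e1*e2) (ws1 @ map (\<lambda>i. (u1*i + k1) mod 3) ws2) ((k1 + u1*k2) mod 3) ((u1*u2) mod 3)"
    by (simp add: nf_def scalar3_mult perm_mat_refl_word[OF assms(1,2)] perm_mat_mult[OF assms]
        refl_word_append mmul3_assoc)
  finally show ?thesis .
qed

text \<open>A B-isometry fixing rho permutes the unit vectors, i.e. is a permutation matrix.\<close>
lemma stabiliser_rho:
  assumes iso: "B_isometry N" and fix_rho: "mv N (1,1,1) = ((1,1,1) :: int triple)"
  shows "\<exists>k u. k < 3 \<and> (u = 1 \<or> u = 2) \<and> N = perm_mat k u"
proof -
  let ?units = "{(1,0,0),(0,1,0),(0,0,1)} :: int triple set"
  have maps_units: "mv N c \<in> ?units" if "c \<in> ?units" for c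
    using roots_at_rho[of "mv N c"] that fix_rho
      B_isometry_bform[OF iso, of c c] B_isometry_bform[OF iso, of c "(1,1,1)"] by auto
  have injective: "mv N c \<noteq> mv N d" if "c \<in> ?units" "d \<in> ?units" "c \<noteq> d" for c d
    using that B_isometry_bform[OF iso, of c d] B_isometry_bform[OF iso, of c c] by auto
  show ?thesis
    by (subst zmat_of_cols, rule perm_mat_of_cols) (intro maps_units injective; simp)+
qed

text \<open>A vector of norm -3 has nonzero coordinate sum, since B(v,v) = s^2 - 4 (ab + bc + ca)
  for v = (a,b,c) with coordinate sum s.\<close>
lemma norm_minus3_sum_nonzero:
  assumes "bform v v = -3"
  shows "coord_sum v \<noteq> 0"
proof
  assume sum0: "coord_sum v = 0"
  obtain a b c where v: "v = (a, b, c)" by (cases v)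
  have "bform v v = coord_sum v * coord_sum v - 4 * (a*b + b*c + c*a)"
    by (simp add: v algebra_simps)
  then have "4 * (a*b + b*c + c*a) = 3" using sum0 assms by simp
  then show False by presburger
qed

text \<open>Every B-isometry M has a normal form: choose e with e * coord_sum (M rho) > 0, reduce
  e * M rho to rho by a reflection word, and what remains fixes rho.\<close>
lemma nf_exists:
  assumes "B_isometry M"
  shows "\<exists>e ws k u. nf_params e k u \<and> M = nf e ws k u"
proof -
  define v where "v = (mv M (1,1,1) :: int triple)"
  have norm: "bform v v = -3"
    using B_isometry_bform[OF assms, of "(1,1,1)" "(1,1,1)"] by (simp add: v_def)
  have "coord_sum v \<noteq> 0" using norm by (rule norm_minus3_sum_nonzero)
  define e :: int where "e = (if coord_sum v > 0 then 1 else -1)"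
  have e: "e = 1 \<or> e = -1" by (simp add: e_def)
  have "bform (mv (scalar3 e) v) (mv (scalar3 e) v) = -3"
    using B_isometry_bform[OF B_isometry_scalar3[OF e], of v v] norm by (simp del: bform.simps)
  moreover have "coord_sum (mv (scalar3 e) v) > 0"
    using \<open>coord_sum v \<noteq> 0\<close> by (cases v) (auto simp: mv_scalar3 e_def)
  ultimately obtain ws where ws: "mv (refl_word ws) (mv (scalar3 e) v) = (1,1,1)"
    using descent_to_rho by blast
  define N where "N = mmul3 (refl_word ws) (mmul3 (scalar3 e) M)"
  have "B_isometry N"
    unfolding N_def by (intro B_isometry_mmul3 B_isometry_refl_word B_isometry_scalar3 e assms)
  moreover have "mv N (1,1,1) = ((1,1,1) :: int triple)"
    using ws by (simp add: N_def mv_mmul3 v_def del: mv.simps)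
  ultimately obtain k u where ku: "k < 3" "u = 1 \<or> u = 2" "N = perm_mat k u"
    using stabiliser_rho by blast
  have "nf e (rev ws) k u = mmul3 (scalar3 e) (mmul3 (mmul3 (refl_word (rev ws)) (refl_word ws))
      (mmul3 (scalar3 e) M))"
    by (simp add: nf_def N_def ku(3)[symmetric] mmul3_assoc)
  also have "\<dots> = M"
    using e by (auto simp: refl_word_rev mmul3_assoc[symmetric] scalar3_mult scalar3_one)
  finally show ?thesis using e ku by blast
qed

definition invertible3 :: "zmat \<Rightarrow> bool" where
  "invertible3 M \<longleftrightarrow> (\<exists>N. mmul3 M N = id3 \<and> mmul3 N M = id3)"

lemma invertible3_mmul3: "invertible3 M \<Longrightarrow> invertible3 N \<Longrightarrow> invertible3 (mmul3 M N)"
  unfolding invertible3_def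
proof (elim exE conjE)
  fix M' N' assume "mmul3 M M' = id3" "mmul3 M' M = id3" "mmul3 N N' = id3" "mmul3 N' N = id3"
  then have "mmul3 (mmul3 M N) (mmul3 N' M') = id3 \<and> mmul3 (mmul3 N' M') (mmul3 M N) = id3"
    by (metis mmul3_assoc mmul3_id3(1))
  then show "\<exists>X. mmul3 (mmul3 M N) X = id3 \<and> mmul3 X (mmul3 M N) = id3" by blast
qed

lemma invertible3_scalar3: "e = 1 \<or> e = -1 \<Longrightarrow> invertible3 (scalar3 e)"
  unfolding invertible3_def by (rule exI[of _ "scalar3 e"]) (auto simp: scalar3_mult scalar3_one)

lemma invertible3_refl_word: "invertible3 (refl_word ws)"
  unfolding invertible3_def using refl_word_rev[of ws] refl_word_rev[of "rev ws"] by auto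

lemma invertible3_perm_mat:
  assumes "k < 3" "u = 1 \<or> u = 2"
  shows "invertible3 (perm_mat k u)"
proof -
  define k' where "k' = (if u = 1 then (3 - k) mod 3 else k)"
  have k': "k' < 3" by (simp add: k'_def assms(1))
  have "mmul3 (perm_mat k u) (perm_mat k' u) = id3" "mmul3 (perm_mat k' u) (perm_mat k u) = id3"
    using assms less_3_cases[OF assms(1)]
    unfolding perm_mat_mult[OF assms k' assms(2)] perm_mat_mult[OF k' assms(2) assms]
    by (auto simp: k'_def perm_mat_id)
  then show ?thesis unfolding invertible3_def by blast
qed

lemma B_isometry_invertible: "B_isometry M \<Longrightarrow> invertible3 M"
  using nf_exists[of M] unfolding nf_def
  by (auto intro!: invertible3_mmul3 invertible3_scalar3 invertible3_refl_word invertible3_perm_mat)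

lemma B_isometry_inverse:
  assumes "B_isometry M" "mmul3 M N = id3"
  shows "B_isometry N"
  unfolding B_isometry_def
proof (intro allI)
  fix u v :: "int triple"
  have "bform (mv N u) (mv N v) = bform (mv M (mv N u)) (mv M (mv N v))"
    by (rule B_isometry_bform[OF assms(1), symmetric])
  also have "\<dots> = bform u v" using assms(2) by (simp add: mv_mmul3[symmetric])
  finally show "bform (mv N u) (mv N v) = bform u v" .
qed

section \<open>Isom_Z(L) as the group of B-isometries\<close>

lemma IsomZ_eq: "(IsomZ :: ('a::field_char_0 mat2 \<Rightarrow> _) set) = lin ` Collect B_isometry"
proof
  show "(IsomZ :: ('a mat2 \<Rightarrow> _) set) \<subseteq> lin ` Collect B_isometry"
    using IsomZ_is_lin by blast
  show "lin ` Collect B_isometry \<subseteq> (IsomZ :: ('a mat2 \<Rightarrow> _) set)"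
    using B_isometry_invertible lin_IsomZ unfolding invertible3_def by blast
qed

lemma carrier_Isom_group: "carrier Isom_group = lin ` Collect B_isometry"
  by (simp add: Isom_group_def IsomZ_eq)

lemma mult_Isom_group: "lin M \<otimes>\<^bsub>Isom_group\<^esub> lin N = (lin (mmul3 M N) :: 'a::field_char_0 mat2 \<Rightarrow> _)"
  by (simp add: Isom_group_def lin_mmul3)

lemma one_Isom_group: "\<one>\<^bsub>Isom_group\<^esub> = (lin id3 :: 'a::field_char_0 mat2 \<Rightarrow> _)"
  by (simp add: Isom_group_def lin_id3)

lemma group_Isom_group: "group (Isom_group :: ('a::field_char_0 mat2 \<Rightarrow> 'a mat2) monoid)"
proof (rule groupI)
  fix x y z :: "'a mat2 \<Rightarrow> 'a mat2"
  assume x: "x \<in> carrier Isom_group"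
  then obtain M where M: "B_isometry M" "x = lin M" by (auto simp: carrier_Isom_group)
  show "\<one>\<^bsub>Isom_group\<^esub> \<otimes>\<^bsub>Isom_group\<^esub> x = x"
    by (simp add: M one_Isom_group mult_Isom_group)
  obtain N where N: "B_isometry N" "mmul3 N M = id3"
    using B_isometry_invertible[OF M(1)] B_isometry_inverse[OF M(1)] by (auto simp: invertible3_def)
  then show "\<exists>y\<in>carrier Isom_group. y \<otimes>\<^bsub>Isom_group\<^esub> x = \<one>\<^bsub>Isom_group\<^esub>"
    by (auto simp: carrier_Isom_group M mult_Isom_group one_Isom_group)
  assume "y \<in> carrier Isom_group"
  then obtain N' where N': "B_isometry N'" "y = lin N'" by (auto simp: carrier_Isom_group)
  show "x \<otimes>\<^bsub>Isom_group\<^esub> y \<in> carrier Isom_group"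
    using M N' by (auto simp: carrier_Isom_group mult_Isom_group B_isometry_mmul3)
  assume "z \<in> carrier Isom_group"
  then obtain K where K: "z = lin K" by (auto simp: carrier_Isom_group)
  show "x \<otimes>\<^bsub>Isom_group\<^esub> y \<otimes>\<^bsub>Isom_group\<^esub> z = x \<otimes>\<^bsub>Isom_group\<^esub> (y \<otimes>\<^bsub>Isom_group\<^esub> z)"
    by (simp add: M N' K mult_Isom_group mmul3_assoc)
next
  show "\<one>\<^bsub>Isom_group\<^esub> \<in> carrier (Isom_group :: ('a mat2 \<Rightarrow> 'a mat2) monoid)"
    by (simp add: carrier_Isom_group one_Isom_group B_isometry_id3)
qed

section \<open>The character chi: B-isometries to Z_2 x D_6\<close>

text \<open>Elements of Z_2 x D_6 are triples (z, a, s): z in Z_2 and r^a f^s in D_6.\<close>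
fun target_mult :: "int \<times> int \<times> bool \<Rightarrow> int \<times> int \<times> bool \<Rightarrow> int \<times> int \<times> bool" where
  "target_mult (z1, a1, s1) (z2, a2, s2) = ((z1 + z2) mod 2, (a1 + (if s1 then -a2 else a2)) mod 6, s1 \<noteq> s2)"

text \<open>Which coordinate of a vector is odd (for vectors congruent to a unit vector mod 2).\<close>
fun odd_pos :: "int triple \<Rightarrow> nat" where
  "odd_pos (a, b, c) = (if odd a then 0 else if odd b then 1 else 2)"

definition rho_sum :: "zmat \<Rightarrow> int" where
  "rho_sum M = coord_sum (mv M (1,1,1))"

text \<open>chi M: the Z_2-part is read off from coord_sum (M rho) mod 4; the rotation part combines
  the sign of coord_sum (M rho) (a half turn) with the position of the odd entry of the first
  column (a third of a turn); the reflection part is the orientation of the permutation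
  of columns mod 2.\<close>
definition chi :: "zmat \<Rightarrow> int \<times> int \<times> bool" where
  "chi M = (if rho_sum M mod 4 = 1 then 1 else 0,
     (3 * (if rho_sum M < 0 then 1 else 0) + 2 * int (odd_pos (mv M (1,0,0)))) mod 6,
     (odd_pos (mv M (0,1,0)) + 3 - odd_pos (mv M (1,0,0))) mod 3 = 2)"

definition chi_nf :: "int \<Rightarrow> nat \<Rightarrow> nat \<Rightarrow> nat \<Rightarrow> int \<times> int \<times> bool" where
  "chi_nf e n k u = (if odd n \<noteq> (e = -1) then 1 else 0,
     (3 * (if e = -1 then 1 else 0) + 2 * int k) mod 6, u = 2)"

text \<open>Componentwise congruence mod 2 of integer vectors; chi only looks at columns mod 2.\<close>
fun cong2 :: "int triple \<Rightarrow> int triple \<Rightarrow> bool" where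
  "cong2 (a, b, c) (a', b', c') = (even (a - a') \<and> even (b - b') \<and> even (c - c'))"

lemma cong2_trans: "cong2 u v \<Longrightarrow> cong2 v w \<Longrightarrow> cong2 u w"
  by (cases u; cases v; cases w) (auto; presburger)

lemma cong2_refl_mat: "cong2 w v \<Longrightarrow> cong2 (mv (refl_mat i) w) v"
  by (cases w; cases v) (auto simp: refl_mat_def R0_def R1_def R2_def; presburger)

lemma cong2_refl_word: "cong2 (mv (refl_word ws) v) v"
proof (induction ws)
  case Nil then show ?case by (cases v) simp
next
  case (Cons i ws) then show ?case by (simp add: mv_mmul3 cong2_refl_mat)
qed

lemma cong2_scalar3: "e = 1 \<or> e = -1 \<Longrightarrow> cong2 (mv (scalar3 e) w) w"
  by (cases w) (auto simp: mv_scalar3; presburger)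

lemma odd_pos_unit3: "cong2 w (unit3 k) \<Longrightarrow> k < 3 \<Longrightarrow> odd_pos w = k"
  by (cases w, drule less_3_cases) (auto simp: unit3_def; presburger)

fun all_odd :: "int triple \<Rightarrow> bool" where
  "all_odd (a, b, c) = (odd a \<and> odd b \<and> odd c)"

lemma refl_mat_all_odd:
  assumes "all_odd v"
  shows "all_odd (mv (refl_mat i) v) \<and> coord_sum (mv (refl_mat i) v) mod 4 = (coord_sum v + 2) mod 4"
proof -
  obtain a b c where v: "v = (a, b, c)" by (cases v)
  obtain p q r where abc: "a = 2*p + 1" "b = 2*q + 1" "c = 2*r + 1"
    using assms by (auto simp: v elim!: oddE)
  have "\<exists>d. all_odd (mv (refl_mat i) v) \<and> coord_sum (mv (refl_mat i) v) = coord_sum v + 2 + 4*d"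
  proof -
    consider "i mod 3 = 0" | "i mod 3 = 1" | "i mod 3 = 2" by linarith
    then show ?thesis
    proof cases
      case 1
      then show ?thesis
        by (intro exI[of _ "q + r - p"]) (simp add: refl_mat_def mv_R0 v abc algebra_simps)
    next
      case 2
      then show ?thesis
        by (intro exI[of _ "p + r - q"]) (simp add: refl_mat_def mv_R1 v abc algebra_simps)
    next
      case 3
      then show ?thesis
        by (intro exI[of _ "p + q - r"]) (simp add: refl_mat_def mv_R2 v abc algebra_simps)
    qed
  qed
  then show ?thesis by auto
qed

lemma refl_word_rho:
  "all_odd (mv (refl_word ws) (1,1,1)) \<and>
   coord_sum (mv (refl_word ws) (1,1,1)) mod 4 = (3 + 2 * int (length ws)) mod 4"
proof (induction ws)
  case Nil then show ?case by simp
next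
  case (Cons i ws)
  define w where "w = mv (refl_word ws) (1,1,1::int)"
  have IH: "all_odd w" "coord_sum w mod 4 = (3 + 2 * int (length ws)) mod 4"
    using Cons by (simp_all add: w_def)
  have "coord_sum (mv (refl_mat i) w) mod 4 = (coord_sum w + 2) mod 4"
    using refl_mat_all_odd[OF IH(1)] by simp
  also have "\<dots> = (3 + 2 * int (length ws) + 2) mod 4" by (metis IH(2) mod_add_left_eq)
  finally show ?case using refl_mat_all_odd[OF IH(1)] by (simp add: mv_mmul3 w_def algebra_simps)
qed

lemma coord_sum_scalar3: "coord_sum (mv (scalar3 e) w) = e * coord_sum w"
  by (cases w) (simp add: mv_scalar3 algebra_simps)

lemma sign_mod4:
  fixes \<sigma> n :: int
  assumes "\<sigma> mod 4 = (3 + 2*n) mod 4" "e = 1 \<or> e = -1"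
  shows "(e*\<sigma>) mod 4 = 1 \<longleftrightarrow> odd n \<noteq> (e = -1)"
proof -
  have "(3 + 2*n) mod 4 = (if odd n then 1 else 3)"
    by (cases "odd n") (auto elim!: oddE evenE simp: algebra_simps)
  moreover have "(-\<sigma>) mod 4 = 1 \<longleftrightarrow> \<sigma> mod 4 = 3" by presburger
  ultimately show ?thesis using assms by (auto split: if_splits)
qed

lemma chi_nf_eq:
  assumes "nf_params e k u"
  shows "chi (nf e ws k u) = chi_nf e (length ws) k u"
proof -
  have e: "e = 1 \<or> e = -1" and k: "k < 3" and u: "u = 1 \<or> u = 2" using assms by auto
  define \<sigma> where "\<sigma> = coord_sum (mv (refl_word ws) (1,1,1))"
  have pos: "\<sigma> > 0" using refl_word_keeps_sum_positive[of "(1,1,1)" ws] by (simp add: \<sigma>_def)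
  have sum: "rho_sum (nf e ws k u) = e * \<sigma>"
    by (simp add: rho_sum_def nf_def mv_mmul3 perm_mat_rho[OF k u] coord_sum_scalar3 \<sigma>_def
        del: mv.simps coord_sum.simps)
  have sign: "e * \<sigma> < 0 \<longleftrightarrow> e = -1" using e pos by auto
  have parity: "(e*\<sigma>) mod 4 = 1 \<longleftrightarrow> odd (length ws) \<noteq> (e = -1)"
    using sign_mod4[OF _ e] refl_word_rho[of ws] by (simp add: \<sigma>_def)
  have col0: "mv (perm_mat k u) (1,0,0) = unit3 k" using k by (simp add: perm_mat_def mv_of_cols_units)
  have col1: "mv (perm_mat k u) (0,1,0) = unit3 ((u + k) mod 3)" by (simp add: perm_mat_def mv_of_cols_units)
  have pos0: "odd_pos (mv (nf e ws k u) (1,0,0)) = k"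
    unfolding nf_def mv_mmul3 col0
    by (rule odd_pos_unit3[OF cong2_trans[OF cong2_scalar3[OF e] cong2_refl_word] k])
  have pos1: "odd_pos (mv (nf e ws k u) (0,1,0)) = (u + k) mod 3"
    unfolding nf_def mv_mmul3 col1
    by (rule odd_pos_unit3[OF cong2_trans[OF cong2_scalar3[OF e] cong2_refl_word]]) simp
  have "((u + k) mod 3 + 3 - k) mod 3 = 2 \<longleftrightarrow> u = 2" using less_3_cases[OF k] u by auto
  then show ?thesis unfolding chi_def chi_nf_def sum pos0 pos1 using sign parity by simp
qed

lemma chi_nf_mult:
  assumes "nf_params e1 k1 u1" "nf_params e2 k2 u2"
  shows "chi_nf (e1*e2) (n1 + n2) ((k1 + u1*k2) mod 3) ((u1*u2) mod 3) =
         target_mult (chi_nf e1 n1 k1 u1) (chi_nf e2 n2 k2 u2)"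
proof -
  have e: "e1 = 1 \<or> e1 = -1" "e2 = 1 \<or> e2 = -1" and u: "u1 = 1 \<or> u1 = 2" "u2 = 1 \<or> u2 = 2"
    and k: "k1 = 0 \<or> k1 = 1 \<or> k1 = 2" "k2 = 0 \<or> k2 = 1 \<or> k2 = 2"
    using assms by auto
  have "(if odd (n1 + n2) \<noteq> (e1*e2 = -1) then 1 else 0) =
    ((if odd n1 \<noteq> (e1 = -1) then 1 else 0) + (if odd n2 \<noteq> (e2 = -1) then 1 else (0::int))) mod 2"
    using e by (cases "odd n1"; cases "odd n2"; auto)
  moreover have "(3 * (if e1*e2 = -1 then 1 else 0) + 2 * int ((k1 + u1*k2) mod 3)) mod 6 =
     ((3 * (if e1 = -1 then 1 else 0) + 2 * int k1) mod 6 +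
       (if u1 = 2 then - ((3 * (if e2 = -1 then 1 else 0) + 2 * int k2) mod 6)
        else (3 * (if e2 = -1 then 1 else 0) + 2 * int k2) mod 6)) mod 6"
    using e k u(1) by (elim disjE; simp)
  moreover have "((u1*u2) mod 3 = 2) = ((u1 = 2) \<noteq> (u2 = 2))" using u by (elim disjE; simp)
  ultimately show ?thesis unfolding chi_nf_def target_mult.simps prod.inject by (intro conjI)
qed

lemma chi_mult:
  assumes "B_isometry M" "B_isometry N"
  shows "chi (mmul3 M N) = target_mult (chi M) (chi N)"
proof -
  obtain e1 ws1 k1 u1 where 1: "nf_params e1 k1 u1" "M = nf e1 ws1 k1 u1"
    using nf_exists[OF assms(1)] by blast
  obtain e2 ws2 k2 u2 where 2: "nf_params e2 k2 u2" "N = nf e2 ws2 k2 u2"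
    using nf_exists[OF assms(2)] by blast
  have "nf_params (e1*e2) ((k1 + u1*k2) mod 3) ((u1*u2) mod 3)"
    using 1(1) 2(1) by (auto; simp)
  then show ?thesis
    using 1 2 nf_mult[of k1 u1 k2 u2] chi_nf_eq chi_nf_mult[OF 1(1) 2(1)] by auto
qed

lemma chi_refl_word: "chi (refl_word ws) = (if odd (length ws) then 1 else 0, 0, False)"
proof -
  have "refl_word ws = nf 1 ws 0 1" by (simp add: nf_def scalar3_one perm_mat_id)
  then show ?thesis using chi_nf_eq[of 1 0 1 ws] by (simp add: chi_nf_def)
qed

section \<open>The reflection group W and parity of word length\<close>

lemma reflU_lin:
  "reflU ex = (lin R0 :: 'a::field_char_0 mat2 \<Rightarrow> _)"
  "reflU ey = (lin R1 :: 'a mat2 \<Rightarrow> _)"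
  "reflU ez = (lin R2 :: 'a mat2 \<Rightarrow> _)"
proof -
  have reflU_eq: "reflU (of_coords e) = (lin M :: 'a mat2 \<Rightarrow> _)"
    if "\<And>x y z. of_coords (x, y, z) - smul (tform (of_coords e) (of_coords (x, y, z))) (of_coords e)
                 = (of_coords (mv M (x, y, z)) :: 'a mat2)" for e M
    unfolding reflU_def lin_def
  proof (rule restrict_ext)
    fix A :: "'a mat2" assume A: "A \<in> sl2"
    obtain x y z where xyz: "coords A = (x, y, z)" by (cases "coords A")
    show "A - smul (tform (of_coords e) A) (of_coords e) = of_coords (mv M (coords A))"
      using that[of x y z] of_coords_coords[OF A] xyz by simp
  qed
  have "of_coords (x, y, z) - smul (tform (of_coords (1,0,0)) (of_coords (x, y, z))) (of_coords (1,0,0))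
      = (of_coords (mv R0 (x, y, z)) :: 'a mat2)"
    "of_coords (x, y, z) - smul (tform (of_coords (0,1,0)) (of_coords (x, y, z))) (of_coords (0,1,0))
      = (of_coords (mv R1 (x, y, z)) :: 'a mat2)"
    "of_coords (x, y, z) - smul (tform (of_coords (0,0,1)) (of_coords (x, y, z))) (of_coords (0,0,1))
      = (of_coords (mv R2 (x, y, z)) :: 'a mat2)" for x y z
    by (simp_all add: mat2_tform of_coords_def mat2_smul mat2_diff R0_def R1_def R2_def mat2_eq_iff
        algebra_simps)
  then show "reflU ex = (lin R0 :: 'a mat2 \<Rightarrow> _)" "reflU ey = (lin R1 :: 'a mat2 \<Rightarrow> _)"
    "reflU ez = (lin R2 :: 'a mat2 \<Rightarrow> _)"
    unfolding basis_of_coords by (blast intro: reflU_eq)+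
qed

lemma refl_gens_eq: "(refl_gens :: ('a::field_char_0 mat2 \<Rightarrow> _) set) = range (\<lambda>i. lin (refl_mat i))"
proof
  have "reflU ex = (lin (refl_mat 0) :: 'a mat2 \<Rightarrow> _)" "reflU ey = (lin (refl_mat 1) :: 'a mat2 \<Rightarrow> _)"
    "reflU ez = (lin (refl_mat 2) :: 'a mat2 \<Rightarrow> _)"
    by (simp_all add: reflU_lin refl_mat_def)
  then show "(refl_gens :: ('a mat2 \<Rightarrow> _) set) \<subseteq> range (\<lambda>i. lin (refl_mat i))"
    unfolding refl_gens_def by (metis empty_subsetI insert_subset rangeI)
  show "range (\<lambda>i. lin (refl_mat i)) \<subseteq> (refl_gens :: ('a mat2 \<Rightarrow> _) set)"
    by (auto simp: refl_gens_def reflU_lin refl_mat_def)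
qed

lemma lin_refl_word_carrier: "(lin (refl_word ws) :: 'a::field_char_0 mat2 \<Rightarrow> _) \<in> carrier Isom_group"
  by (simp add: carrier_Isom_group B_isometry_refl_word)

lemma foldr_refl_gens:
  "set hs \<subseteq> (refl_gens :: ('a::field_char_0 mat2 \<Rightarrow> _) set) \<Longrightarrow>
   \<exists>ws. length ws = length hs \<and> foldr (\<otimes>\<^bsub>Isom_group\<^esub>) hs \<one>\<^bsub>Isom_group\<^esub> = lin (refl_word ws)"
proof (induction hs)
  case Nil then show ?case by (simp add: one_Isom_group)
next
  case (Cons h hs)
  then obtain ws where ws: "length ws = length hs"
    "foldr (\<otimes>\<^bsub>Isom_group\<^esub>) hs \<one>\<^bsub>Isom_group\<^esub> = lin (refl_word ws)"
    by auto
  obtain i where "h = lin (refl_mat i)" using Cons.prems refl_gens_eq by auto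
  then have "foldr (\<otimes>\<^bsub>Isom_group\<^esub>) (h # hs) \<one>\<^bsub>Isom_group\<^esub> = lin (refl_word (i # ws))"
    using ws by (simp add: mult_Isom_group)
  then show ?case using ws by (metis length_Cons)
qed

lemma refl_word_foldr:
  "set (map (\<lambda>i. lin (refl_mat i)) ws) \<subseteq> (refl_gens :: ('a::field_char_0 mat2 \<Rightarrow> _) set) \<and>
   foldr (\<otimes>\<^bsub>Isom_group\<^esub>) (map (\<lambda>i. lin (refl_mat i)) ws) \<one>\<^bsub>Isom_group\<^esub> = (lin (refl_word ws) :: 'a mat2 \<Rightarrow> _)"
  by (induction ws) (auto simp: one_Isom_group mult_Isom_group refl_gens_eq)

text \<open>Every element of W is induced by a reflection word (the generators are involutions).\<close>
lemma Wgrp_refl_words: "(Wgrp :: ('a::field_char_0 mat2 \<Rightarrow> _) set) \<subseteq> range (\<lambda>ws. lin (refl_word ws))"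
proof
  fix g :: "'a mat2 \<Rightarrow> 'a mat2" assume "g \<in> Wgrp"
  then show "g \<in> range (\<lambda>ws. lin (refl_word ws))"
    unfolding Wgrp_def
  proof (induction rule: generate.induct)
    case one
    have "\<one>\<^bsub>Isom_group\<^esub> = (lin (refl_word []) :: 'a mat2 \<Rightarrow> _)" by (simp add: one_Isom_group)
    then show ?case by blast
  next
    case (incl h)
    then obtain i where "h = lin (refl_mat i)" using refl_gens_eq by blast
    then have "h = lin (refl_word [i])" by simp
    then show ?case by blast
  next
    case (inv h)
    then obtain i where h: "h = lin (refl_mat i)" using refl_gens_eq by blast
    have "h \<in> carrier Isom_group" using h lin_refl_word_carrier[of "[i]"] by simp
    moreover have "h \<otimes>\<^bsub>Isom_group\<^esub> h = \<one>\<^bsub>Isom_group\<^esub>"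
      by (simp add: h mult_Isom_group one_Isom_group refl_mat_involution)
    ultimately have "inv\<^bsub>Isom_group\<^esub> h = lin (refl_word [i])"
      using group.inv_equality[OF group_Isom_group] h by fastforce
    then show ?case by blast
  next
    case (eng h1 h2)
    then obtain ws1 ws2 where "h1 = lin (refl_word ws1)" "h2 = lin (refl_word ws2)" by blast
    then have "h1 \<otimes>\<^bsub>Isom_group\<^esub> h2 = lin (refl_word (ws1 @ ws2))"
      by (simp add: mult_Isom_group refl_word_append)
    then show ?case by blast
  qed
qed

lemma refl_word_Wgrp: "(lin (refl_word ws) :: 'a::field_char_0 mat2 \<Rightarrow> _) \<in> Wgrp"
  unfolding Wgrp_def
proof (induction ws)
  case Nil
  have "(lin (refl_word []) :: 'a mat2 \<Rightarrow> _) = \<one>\<^bsub>Isom_group\<^esub>" by (simp add: one_Isom_group)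
  then show ?case using generate.one by metis
next
  case (Cons i ws)
  have "(lin (refl_mat i) :: 'a mat2 \<Rightarrow> _) \<in> refl_gens" using refl_gens_eq by blast
  then have "(lin (refl_mat i) :: 'a mat2 \<Rightarrow> _) \<otimes>\<^bsub>Isom_group\<^esub> lin (refl_word ws)
      \<in> generate Isom_group refl_gens"
    using Cons by (blast intro: generate.eng generate.incl)
  then show ?case by (simp add: mult_Isom_group)
qed

lemma Wgrp_eq: "(Wgrp :: ('a::field_char_0 mat2 \<Rightarrow> _) set) = range (\<lambda>ws. lin (refl_word ws))"
  using Wgrp_refl_words refl_word_Wgrp by blast

definition Mat :: "('a::field_char_0 mat2 \<Rightarrow> 'a mat2) \<Rightarrow> zmat" where
  "Mat \<phi> = (THE M. \<phi> = lin M)"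

lemma Mat_lin: "Mat (lin M :: 'a::field_char_0 mat2 \<Rightarrow> _) = M"
  unfolding Mat_def by (rule the_equality) (auto dest: lin_inj)

text \<open>On W the first component of chi is the parity of the word length, which is therefore
  the parity of every word representing the element.\<close>
lemma chi_Wgrp:
  assumes "\<phi> \<in> (Wgrp :: ('a::field_char_0 mat2 \<Rightarrow> _) set)"
  shows "chi (Mat \<phi>) = (if odd (word_length Isom_group refl_gens \<phi>) then 1 else 0, 0, False)"
proof -
  let ?is_length = "\<lambda>n. \<exists>hs. length hs = n \<and> set hs \<subseteq> (refl_gens :: ('a mat2 \<Rightarrow> _) set) \<and>
      foldr (\<otimes>\<^bsub>Isom_group\<^esub>) hs \<one>\<^bsub>Isom_group\<^esub> = \<phi>"
  obtain ws where "\<phi> = lin (refl_word ws)" using assms Wgrp_eq by blast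
  then have "?is_length (length ws)"
    using refl_word_foldr[of ws] by (intro exI[of _ "map (\<lambda>i. lin (refl_mat i)) ws"]) simp
  then have "?is_length (word_length Isom_group refl_gens \<phi>)"
    unfolding word_length_def by (rule LeastI)
  then obtain hs where hs: "length hs = word_length Isom_group refl_gens \<phi>"
    "set hs \<subseteq> refl_gens" "foldr (\<otimes>\<^bsub>Isom_group\<^esub>) hs \<one>\<^bsub>Isom_group\<^esub> = \<phi>"
    by blast
  obtain ws' where "length ws' = length hs" "\<phi> = lin (refl_word ws')"
    using foldr_refl_gens[OF hs(2)] hs(3) by metis
  then show ?thesis using chi_refl_word[of ws'] hs(1) by (simp add: Mat_lin)
qed

section \<open>The target group Z_2 x D_6\<close>

lemma group_dihedral_group:
  assumes "n > 0"
  shows "group (dihedral_group n)"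
proof (rule groupI)
  fix x y z :: "int \<times> bool" assume x: "x \<in> carrier (dihedral_group n)"
  obtain a s where xs: "x = (a, s)" by (cases x)
  show "x \<otimes>\<^bsub>dihedral_group n\<^esub> y \<in> carrier (dihedral_group n)"
    using assms by (cases x; cases y) (simp add: dihedral_group_def)
  show "\<one>\<^bsub>dihedral_group n\<^esub> \<otimes>\<^bsub>dihedral_group n\<^esub> x = x"
    using x by (cases x) (simp add: dihedral_group_def)
  have a: "0 \<le> a" "a < int n" using x xs by (auto simp: dihedral_group_def)
  define x' where "x' = (if s then (a, True) else ((int n - a) mod int n, False))"
  have "x' \<in> carrier (dihedral_group n)" using assms a by (simp add: x'_def dihedral_group_def)
  moreover have "x' \<otimes>\<^bsub>dihedral_group n\<^esub> x = \<one>\<^bsub>dihedral_group n\<^esub>"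
    using a by (simp add: x'_def xs dihedral_group_def mod_simps)
  ultimately show "\<exists>y\<in>carrier (dihedral_group n). y \<otimes>\<^bsub>dihedral_group n\<^esub> x = \<one>\<^bsub>dihedral_group n\<^esub>"
    by blast
  obtain b t where ys: "y = (b, t)" by (cases y)
  obtain c w where zs: "z = (c, w)" by (cases z)
  have "((a + (if s then - b else b)) mod n + (if s \<noteq> t then - c else c)) mod n =
        (a + (if s then - ((b + (if t then - c else c)) mod n) else (b + (if t then - c else c)) mod n)) mod n"
    by (cases s; cases t; simp add: mod_simps algebra_simps)
  then show "x \<otimes>\<^bsub>dihedral_group n\<^esub> y \<otimes>\<^bsub>dihedral_group n\<^esub> z =
        x \<otimes>\<^bsub>dihedral_group n\<^esub> (y \<otimes>\<^bsub>dihedral_group n\<^esub> z)"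
    by (simp add: dihedral_group_def xs ys zs) blast
next
  show "\<one>\<^bsub>dihedral_group n\<^esub> \<in> carrier (dihedral_group n)" using assms by (simp add: dihedral_group_def)
qed

abbreviation Target :: "(int \<times> int \<times> bool) monoid" where
  "Target \<equiv> DirProd (integer_mod_group 2) (dihedral_group 6)"

lemma carrier_Target: "carrier Target = {0..<2} \<times> {0..<6} \<times> UNIV"
  by (simp add: carrier_integer_mod_group dihedral_group_def)

lemma mult_Target: "x \<otimes>\<^bsub>Target\<^esub> y = target_mult x y"
  by (cases x; cases y) (simp add: dihedral_group_def)

lemma group_Target: "group Target"
  by (intro DirProd_group group_integer_mod_group group_dihedral_group) simp

lemma chi_nf_carrier: "chi_nf e n k u \<in> carrier Target"
  unfolding carrier_Target by (simp add: chi_nf_def)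

text \<open>Every element of Z_2 x D_6 is a value of chi_nf: the sign and k give the rotation,
  u the reflection, and the parity of n then adjusts the Z_2-component.\<close>
lemma chi_nf_surj:
  assumes "t \<in> carrier Target"
  shows "\<exists>e n k u. nf_params e k u \<and> chi_nf e n k u = t"
proof -
  obtain z a s where t: "t = (z, a, s)" by (cases t)
  have z: "z = 0 \<or> z = 1" and a: "a = 0 \<or> a = 1 \<or> a = 2 \<or> a = 3 \<or> a = 4 \<or> a = 5"
    using assms unfolding carrier_Target t by auto
  define e :: int where "e = (if odd a then -1 else 1)"
  define k :: nat where "k = (if a = 0 \<or> a = 3 then 0 else if a = 2 \<or> a = 5 then 1 else 2)"
  define n :: nat where "n = (if (z = 1) \<noteq> (e = -1) then 1 else 0)"
  define u :: nat where "u = (if s then 2 else 1)"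
  have "chi_nf e n k u = t" unfolding t chi_nf_def e_def k_def n_def u_def
    using z a by (elim disjE; simp)
  moreover have "nf_params e k u" by (simp add: e_def k_def u_def)
  ultimately show ?thesis by blast
qed

lemma chi_nf_one:
  assumes "nf_params e k u" "chi_nf e n k u = (0, 0, False)"
  shows "e = 1 \<and> k = 0 \<and> u = 1 \<and> even n"
  using assms less_3_cases[of k] by (auto simp: chi_nf_def split: if_splits)

section \<open>The homomorphism Isom_Z(L) to Z_2 x D_6 and its kernel\<close>

definition chi_Isom :: "('a::field_char_0 mat2 \<Rightarrow> 'a mat2) \<Rightarrow> int \<times> int \<times> bool" where
  "chi_Isom \<phi> = chi (Mat \<phi>)"

lemma chi_Isom_hom: "chi_Isom \<in> hom (Isom_group :: ('a::field_char_0 mat2 \<Rightarrow> 'a mat2) monoid) Target"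
proof (rule homI)
  fix x y :: "'a mat2 \<Rightarrow> 'a mat2"
  assume "x \<in> carrier Isom_group"
  then obtain M where M: "B_isometry M" "x = lin M" by (auto simp: carrier_Isom_group)
  then obtain e ws k u where "nf_params e k u" "M = nf e ws k u" using nf_exists by blast
  then show "chi_Isom x \<in> carrier Target"
    using M chi_nf_carrier by (simp add: chi_Isom_def Mat_lin chi_nf_eq)
  assume "y \<in> carrier Isom_group"
  then obtain N where "B_isometry N" "y = lin N" by (auto simp: carrier_Isom_group)
  then show "chi_Isom (x \<otimes>\<^bsub>Isom_group\<^esub> y) = chi_Isom x \<otimes>\<^bsub>Target\<^esub> chi_Isom y"
    using M by (simp add: chi_Isom_def Mat_lin mult_Isom_group mult_Target chi_mult)
qed

lemma chi_Isom_surj: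
  "chi_Isom ` carrier (Isom_group :: ('a::field_char_0 mat2 \<Rightarrow> 'a mat2) monoid) = carrier Target"
proof
  show "chi_Isom ` carrier (Isom_group :: ('a mat2 \<Rightarrow> 'a mat2) monoid) \<subseteq> carrier Target"
    using chi_Isom_hom hom_carrier by blast
  show "carrier Target \<subseteq> chi_Isom ` carrier (Isom_group :: ('a mat2 \<Rightarrow> 'a mat2) monoid)"
  proof
    fix t assume "t \<in> carrier Target"
    then obtain e n k u where p: "nf_params e k u" and t: "chi_nf e n k u = t"
      using chi_nf_surj by blast
    define \<phi> where "\<phi> = (lin (nf e (replicate n 0) k u) :: 'a mat2 \<Rightarrow> 'a mat2)"
    have "\<phi> \<in> carrier Isom_group"
      using B_isometry_nf[OF p] by (simp add: \<phi>_def carrier_Isom_group)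
    moreover have "chi_Isom \<phi> = t" using chi_nf_eq[OF p] t by (simp add: chi_Isom_def \<phi>_def Mat_lin)
    ultimately show "t \<in> chi_Isom ` carrier (Isom_group :: ('a mat2 \<Rightarrow> 'a mat2) monoid)" by blast
  qed
qed

text \<open>The kernel of chi consists of the normal forms with e = 1, trivial permutation and an
  even reflection word, i.e. of W^+.\<close>
lemma kernel_chi_Isom:
  "kernel (Isom_group :: ('a::field_char_0 mat2 \<Rightarrow> 'a mat2) monoid) Target chi_Isom = Wplus"
proof
  show "kernel (Isom_group :: ('a mat2 \<Rightarrow> 'a mat2) monoid) Target chi_Isom \<subseteq> Wplus"
  proof
    fix \<phi> :: "'a mat2 \<Rightarrow> 'a mat2"
    assume "\<phi> \<in> kernel Isom_group Target chi_Isom"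
    then obtain M where M: "B_isometry M" "\<phi> = lin M" and chi1: "chi M = (0, 0, False)"
      by (auto simp: kernel_def carrier_Isom_group chi_Isom_def dihedral_group_def Mat_lin)
    obtain e ws k u where p: "nf_params e k u" and nf: "M = nf e ws k u"
      using nf_exists[OF M(1)] by blast
    have "e = 1" "k = 0" "u = 1"
      using chi_nf_one[OF p] chi1 chi_nf_eq[OF p] by (auto simp: nf)
    then have "\<phi> = lin (refl_word ws)" by (simp add: M(2) nf nf_def scalar3_one perm_mat_id)
    then have W: "\<phi> \<in> Wgrp" by (simp add: Wgrp_eq)
    then have "even (word_length Isom_group refl_gens \<phi>)"
      using chi_Wgrp[OF W] chi1 M(2) by (auto simp: Mat_lin split: if_splits)
    then show "\<phi> \<in> Wplus" using W by (simp add: Wplus_def)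
  qed
  show "Wplus \<subseteq> kernel (Isom_group :: ('a mat2 \<Rightarrow> 'a mat2) monoid) Target chi_Isom"
  proof
    fix \<phi> :: "'a mat2 \<Rightarrow> 'a mat2"
    assume "\<phi> \<in> Wplus"
    then have W: "\<phi> \<in> Wgrp" and even: "even (word_length Isom_group refl_gens \<phi>)"
      by (auto simp: Wplus_def)
    have "\<phi> \<in> carrier Isom_group" using W lin_refl_word_carrier by (auto simp: Wgrp_eq)
    moreover have "chi_Isom \<phi> = (0, 0, False)" using chi_Wgrp[OF W] even by (simp add: chi_Isom_def)
    ultimately show "\<phi> \<in> kernel Isom_group Target chi_Isom"
      by (simp add: kernel_def dihedral_group_def)
  qed
qed

theorem proposition7p9:
  shows "(Isom_group :: ('a::field_char_0 mat2 \<Rightarrow> 'a mat2) monoid) Mod Wplus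
           \<cong> DirProd (integer_mod_group 2) (dihedral_group 6)"
proof -
  have "group_hom (Isom_group :: ('a mat2 \<Rightarrow> 'a mat2) monoid) Target chi_Isom"
    by (intro group_hom.intro group_hom_axioms.intro group_Isom_group group_Target chi_Isom_hom)
  from group_hom.FactGroup_iso[OF this chi_Isom_surj] show ?thesis
    by (simp only: kernel_chi_Isom)
qed

end
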